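(* Let $T$ be a subset of $\mathbb{N}_0^d$ whose affine span has dimension $1$. Then the $1$-completion of $T$ equals $\Lambda(T)\cap\mathbb{N}_0^d$.
   Context: $\mathbb{N}_0=\{0,1,2,\dots\}$. For nonempty $\Gamma\subseteq\mathbb{N}_0^d$, $\Lambda(\Gamma)$ is the coset in $\mathbb{Z}^d$ generated by $\Gamma$ (smallest coset of a subgroup of $\mathbb{Z}^d$ containing $\Gamma$); each $\lambda\in\Lambda(\Gamma)$ can be written $\lambda=\gamma+\sum_{\alpha\in\Gamma,\alpha\neq\gamma}m_{\gamma,\alpha}(\alpha-\gamma)$ with $\gamma\in\Gamma$ and integers $m_{\gamma,\alpha}$, finitely many nonzero. $d(\Gamma,\lambda)$ is the infimum over all such representations of $\max\big(\sum_{m_{\gamma,\alpha}>0}m_{\gamma,\alpha},-\sum_{m_{\gamma,\alpha}<0}m_{\gamma,\alpha}\big)$, and $E_n(\Gamma)=\{\lambda\in\Lambda(\Gamma)\cap\mathbb{N}_0^d:d(\Gamma,\lambda)\leq n\}$. Set $E_n^1(T)=E_n(T)$, $E_n^{k+1}(T)=E_n(E_n^k(T))$, and the $n$-completion $E_n^\infty(T)=\bigcup_{k\geq1}E_n^k(T)$. *)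

theory Defs
  imports "HOL-Analysis.Analysis"
begin

text \<open>Points of Z^d are modelled as int ^ 'd (d = CARD('d), arbitrary but fixed).\<close>

definition Nd :: "(int ^ 'd) set" where
  "Nd = {x. \<forall>i. 0 \<le> x $ i}"

definition is_subgroup :: "(int ^ 'd) set \<Rightarrow> bool" where
  "is_subgroup H \<longleftrightarrow> 0 \<in> H \<and> (\<forall>x\<in>H. \<forall>y\<in>H. x - y \<in> H)"

definition is_coset :: "(int ^ 'd) set \<Rightarrow> bool" where
  "is_coset C \<longleftrightarrow> (\<exists>a H. is_subgroup H \<and> C = (\<lambda>h. a + h) ` H)"

definition Lam :: "(int ^ 'd) set \<Rightarrow> (int ^ 'd) set" where
  "Lam G = \<Inter> {C. is_coset C \<and> G \<subseteq> C}"

definition is_rep :: "(int ^ 'd) set \<Rightarrow> int ^ 'd \<Rightarrow> int ^ 'd \<Rightarrow> (int ^ 'd \<Rightarrow> int) \<Rightarrow> bool" where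
  "is_rep G l g m \<longleftrightarrow> g \<in> G \<and> finite {a. m a \<noteq> 0} \<and>
     (\<forall>a. m a \<noteq> 0 \<longrightarrow> a \<in> G \<and> a \<noteq> g) \<and>
     l = g + (\<Sum>a\<in>{a. m a \<noteq> 0}. m a *s (a - g))"

definition rep_cost :: "(int ^ 'd \<Rightarrow> int) \<Rightarrow> nat" where
  "rep_cost m = nat (max (\<Sum>a\<in>{a. m a > 0}. m a) (- (\<Sum>a\<in>{a. m a < 0}. m a)))"

definition dist_G :: "(int ^ 'd) set \<Rightarrow> int ^ 'd \<Rightarrow> enat" where
  "dist_G G l = (INF p \<in> {(g, m). is_rep G l g m}. enat (rep_cost (snd p)))"

definition En :: "nat \<Rightarrow> (int ^ 'd) set \<Rightarrow> (int ^ 'd) set" where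
  "En n G = {l \<in> Lam G \<inter> Nd. dist_G G l \<le> enat n}"

definition En_iter :: "nat \<Rightarrow> nat \<Rightarrow> (int ^ 'd) set \<Rightarrow> (int ^ 'd) set" where
  "En_iter n k T = (En n ^^ k) T"

definition En_completion :: "nat \<Rightarrow> (int ^ 'd) set \<Rightarrow> (int ^ 'd) set" where
  "En_completion n T = (\<Union>k\<in>{1..}. En_iter n k T)"

definition to_real :: "int ^ 'd \<Rightarrow> real ^ 'd" where
  "to_real x = (\<chi> i. real_of_int (x $ i))"

end

theory Submission
  imports Defs
begin

text \<open>Each \<open>E\<^sub>1\<close> step stays inside \<open>\<Lambda>\<close>, while the 1-completion \<open>C\<close> of \<open>T\<close> is closed
  under \<open>x - y + z\<close> whenever the result lies in \<open>N\<^sub>0\<^sup>d\<close>. As \<open>T\<close> is collinear, so are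
  \<open>\<Lambda>(T)\<close> and \<open>C\<close>, and a coordinate \<open>i\<close> on which two points of \<open>C\<close> differ is injective on
  their line. Projected to coordinate \<open>i\<close>, \<open>C\<close> becomes a set \<open>S\<close> of integers closed under
  \<open>s - t + r\<close> inside the convex set of values whose point on the line lies in \<open>N\<^sub>0\<^sup>d\<close>.
  If \<open>\<delta>\<close> is the least positive gap in \<open>S\<close>, convexity forces \<open>S\<close> to be exactly the admissible
  part of one residue class mod \<open>\<delta>\<close>. So \<open>C\<close> is \<open>N\<^sub>0\<^sup>d\<close> intersected with a coset (the lattice
  points of the line in that class), and this coset contains \<open>\<Lambda>(T)\<close>.\<close>

lemma coset_diff_add:
  assumes "is_coset C" "a \<in> C" "b \<in> C" "c \<in> C"
  shows "a - b + c \<in> C"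
proof -
  obtain x H where H: "is_subgroup H" "C = (\<lambda>h. x + h) ` H"
    using assms(1) unfolding is_coset_def by blast
  then obtain ha hb hc where "ha \<in> H" "hb \<in> H" "hc \<in> H"
    and "a = x + ha" "b = x + hb" "c = x + hc"
    using assms(2-4) by blast
  moreover have "ha - hb - (0 - hc) \<in> H"
    using H(1) \<open>ha \<in> H\<close> \<open>hb \<in> H\<close> \<open>hc \<in> H\<close> unfolding is_subgroup_def by blast
  ultimately show ?thesis
    using H(2) by (force simp: algebra_simps)
qed

lemma is_cosetI:
  assumes "x \<in> C" and closed: "\<And>a b c. a \<in> C \<Longrightarrow> b \<in> C \<Longrightarrow> c \<in> C \<Longrightarrow> a - b + c \<in> C"
  shows "is_coset C"
proof -
  let ?H = "(\<lambda>y. y - x) ` C"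
  have "is_subgroup ?H"
    unfolding is_subgroup_def
  proof (intro conjI ballI)
    show "0 \<in> ?H" using \<open>x \<in> C\<close> by force
    fix h k assume "h \<in> ?H" "k \<in> ?H"
    then obtain a b where "a \<in> C" "b \<in> C" "h = a - x" "k = b - x" by blast
    then show "h - k \<in> ?H"
      using closed[OF \<open>a \<in> C\<close> \<open>b \<in> C\<close> \<open>x \<in> C\<close>] by (force simp: algebra_simps)
  qed
  moreover have "C = (\<lambda>h. x + h) ` ?H" by (force simp: image_image)
  ultimately show ?thesis unfolding is_coset_def by blast
qed

lemma subset_Lam: "G \<subseteq> Lam G"
  unfolding Lam_def by blast

lemma Lam_subset: "is_coset C \<Longrightarrow> G \<subseteq> C \<Longrightarrow> Lam G \<subseteq> C"
  unfolding Lam_def by blast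

lemma Lam_subset_Lam: "G \<subseteq> Lam T \<Longrightarrow> Lam G \<subseteq> Lam T"
  unfolding Lam_def by blast

lemma Lam_diff_add: "a \<in> Lam G \<Longrightarrow> b \<in> Lam G \<Longrightarrow> c \<in> Lam G \<Longrightarrow> a - b + c \<in> Lam G"
  unfolding Lam_def using coset_diff_add by blast

lemma dist_G_diff_add_le:
  assumes "a \<in> G" "b \<in> G" "c \<in> G"
  shows "dist_G G (a - b + c) \<le> enat 1"
proof -
  \<comment> \<open>\<open>a - b + c = c + (a - c) - (b - c)\<close> with base point \<open>c\<close>; a representation needs the
    coefficient at \<open>c\<close> to be 0, which is harmless since the term \<open>c - c\<close> vanishes.\<close>
  define m where "m x = (if x = c then 0 else of_bool (x = a) - of_bool (x = b) :: int)" for x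
  have supp: "{x. m x \<noteq> 0} \<subseteq> {a, b} - {c}"
    unfolding m_def by auto
  have "(\<Sum>x\<in>{x. m x \<noteq> 0}. m x *s (x - c)) = (\<Sum>x\<in>{a, b}. m x *s (x - c))"
    using supp by (intro sum.mono_neutral_left) auto
  also have "\<dots> = a - b"
  proof (cases "a = b")
    case False
    then have "m a *s (a - c) = a - c" "m b *s (b - c) = c - b"
      by (auto simp: m_def vec_eq_iff)
    with False show ?thesis by simp
  qed (simp add: m_def)
  finally have "is_rep G (a - b + c) c m"
    using assms supp unfolding is_rep_def by (auto intro: finite_subset)
  moreover have "rep_cost m \<le> 1"
  proof -
    have "{x. 0 < m x} \<subseteq> {a}" "{x. m x < 0} \<subseteq> {b}" "\<And>x. m x \<le> 1" "\<And>x. -1 \<le> m x"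
      unfolding m_def by auto
    then have "sum m {x. 0 < m x} \<le> 1" "- sum m {x. m x < 0} \<le> 1"
      by (auto dest!: subset_singletonD)
    then show ?thesis
      unfolding rep_cost_def by linarith
  qed
  ultimately show ?thesis
    unfolding dist_G_def by (intro INF_lower2[of "(c, m)"]) auto
qed

lemma En_subset: "En n G \<subseteq> Lam G \<inter> Nd"
  unfolding En_def by blast

lemma diff_add_mem_En1:
  assumes "a \<in> G" "b \<in> G" "c \<in> G" "a - b + c \<in> Nd"
  shows "a - b + c \<in> En 1 G"
  using assms dist_G_diff_add_le[OF assms(1-3)] Lam_diff_add subset_Lam
  unfolding En_def by blast

lemma subset_En1: "G \<subseteq> Nd \<Longrightarrow> G \<subseteq> En 1 G"
  using diff_add_mem_En1[of x G x x for x] by auto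

lemma En_iter_Suc: "En_iter n (Suc k) T = En n (En_iter n k T)"
  unfolding En_iter_def by simp

lemma En_iter_subset: "T \<subseteq> Nd \<Longrightarrow> En_iter n k T \<subseteq> Lam T \<inter> Nd"
proof (induction k)
  case 0
  then show ?case using subset_Lam by (auto simp: En_iter_def)
next
  case (Suc k)
  then show ?case
    using En_subset[of n "En_iter n k T"] Lam_subset_Lam[of "En_iter n k T" T]
    by (auto simp: En_iter_Suc)
qed

lemma En_iter_mono: "T \<subseteq> Nd \<Longrightarrow> j \<le> k \<Longrightarrow> En_iter 1 j T \<subseteq> En_iter 1 k T"
proof (rule lift_Suc_mono_le[of "\<lambda>k. En_iter 1 k T"])
  show "En_iter 1 k T \<subseteq> En_iter 1 (Suc k) T" if "T \<subseteq> Nd" for k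
    unfolding En_iter_Suc using En_iter_subset[OF that] subset_En1 by blast
qed

lemma En_completion_subset: "T \<subseteq> Nd \<Longrightarrow> En_completion n T \<subseteq> Lam T \<inter> Nd"
  unfolding En_completion_def using En_iter_subset by blast

lemma subset_En_completion: "T \<subseteq> Nd \<Longrightarrow> T \<subseteq> En_completion 1 T"
  unfolding En_completion_def using subset_En1[of T]
  by (force simp: En_iter_def)

lemma En_completion_diff_add:
  assumes "T \<subseteq> Nd" and "a \<in> En_completion 1 T" "b \<in> En_completion 1 T" "c \<in> En_completion 1 T"
    and "a - b + c \<in> Nd"
  shows "a - b + c \<in> En_completion 1 T"
proof -
  obtain i j k where "a \<in> En_iter 1 i T" "b \<in> En_iter 1 j T" "c \<in> En_iter 1 k T"
    using assms(2-4) unfolding En_completion_def by blast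
  then have "a \<in> En_iter 1 (max i (max j k)) T" "b \<in> En_iter 1 (max i (max j k)) T"
    "c \<in> En_iter 1 (max i (max j k)) T"
    using En_iter_mono[OF assms(1)] by (meson max.cobounded1 max.cobounded2 order_trans subsetD)+
  then have "a - b + c \<in> En_iter 1 (Suc (max i (max j k))) T"
    using diff_add_mem_En1 assms(5) by (simp add: En_iter_Suc)
  then show ?thesis
    unfolding En_completion_def by force
qed

lemma affine_nonneg_between:
  fixes \<alpha> \<beta> x y z :: "'a::linordered_idom"
  assumes "0 \<le> \<alpha> + \<beta> * x" "0 \<le> \<alpha> + \<beta> * z" "x \<le> y" "y \<le> z"
  shows "0 \<le> \<alpha> + \<beta> * y"
proof (cases "0 \<le> \<beta>")
  case True
  then have "\<beta> * x \<le> \<beta> * y" using \<open>x \<le> y\<close> by (simp add: mult_left_mono)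
  then show ?thesis using assms(1) by simp
next
  case False
  then have "\<beta> * z \<le> \<beta> * y" using \<open>y \<le> z\<close> by (simp add: mult_left_mono_neg)
  then show ?thesis using assms(2) by simp
qed

lemma progression_mem_closed_set:
  fixes S :: "int set"
  assumes convex: "\<And>x y z. P x \<Longrightarrow> P z \<Longrightarrow> x \<le> y \<Longrightarrow> y \<le> z \<Longrightarrow> P y"
    and closed: "\<And>a b c. a \<in> S \<Longrightarrow> b \<in> S \<Longrightarrow> c \<in> S \<Longrightarrow> P (a - b + c) \<Longrightarrow> a - b + c \<in> S"
    and "S \<subseteq> Collect P" "\<beta> \<in> S" "\<beta> + \<delta> \<in> S" "0 \<le> \<delta>"
    and "P (\<beta> + k * \<delta>)"
  shows "\<beta> + k * \<delta> \<in> S"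
proof -
  have "P \<beta>" using assms(3,4) by blast
  have up: "P (\<beta> + int n * \<delta>) \<Longrightarrow> \<beta> + int n * \<delta> \<in> S" for n
  proof (induction n)
    case (Suc n)
    have "P (\<beta> + int n * \<delta>)"
      using convex[OF \<open>P \<beta>\<close> Suc.prems] \<open>0 \<le> \<delta>\<close> by (simp add: algebra_simps)
    moreover have "\<beta> + int (Suc n) * \<delta> = (\<beta> + \<delta>) - \<beta> + (\<beta> + int n * \<delta>)"
      by (simp add: algebra_simps)
    ultimately show ?case
      using Suc closed[OF assms(5,4)] by metis
  qed (simp add: \<open>\<beta> \<in> S\<close>)
  have down: "P (\<beta> - int n * \<delta>) \<Longrightarrow> \<beta> - int n * \<delta> \<in> S" for n
  proof (induction n)
    case (Suc n)
    have "P (\<beta> - int n * \<delta>)"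
      using convex[OF Suc.prems \<open>P \<beta>\<close>] \<open>0 \<le> \<delta>\<close> by (simp add: algebra_simps)
    moreover have "\<beta> - int (Suc n) * \<delta> = \<beta> - (\<beta> + \<delta>) + (\<beta> - int n * \<delta>)"
      by (simp add: algebra_simps)
    ultimately show ?case
      using Suc closed[OF assms(4,5)] by metis
  qed (simp add: \<open>\<beta> \<in> S\<close>)
  show ?thesis
  proof (cases "0 \<le> k")
    case True
    then show ?thesis using up[of "nat k"] assms(7) by simp
  next
    case False
    then show ?thesis using down[of "nat (- k)"] assms(7) by simp
  qed
qed

lemma mod_eq_of_min_gap:
  fixes S :: "int set"
  assumes convex: "\<And>x y z. P x \<Longrightarrow> P z \<Longrightarrow> x \<le> y \<Longrightarrow> y \<le> z \<Longrightarrow> P y"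
    and "S \<subseteq> Collect P" "\<beta> \<in> S" "0 < \<delta>"
    and prog: "\<And>k. P (\<beta> + k * \<delta>) \<Longrightarrow> \<beta> + k * \<delta> \<in> S"
    and min_gap: "\<And>x y. x \<in> S \<Longrightarrow> y \<in> S \<Longrightarrow> x \<noteq> y \<Longrightarrow> \<delta> \<le> \<bar>x - y\<bar>"
    and "x \<in> S"
  shows "x mod \<delta> = \<beta> mod \<delta>"
proof (rule ccontr)
  assume "x mod \<delta> \<noteq> \<beta> mod \<delta>"
  define q where "q = (x - \<beta>) div \<delta>"
  define r where "r = (x - \<beta>) mod \<delta>"
  have "x = \<beta> + q * \<delta> + r"
    unfolding q_def r_def by simp
  moreover have "r \<noteq> 0"
    using \<open>x mod \<delta> \<noteq> \<beta> mod \<delta>\<close> unfolding r_def by (simp add: mod_eq_dvd_iff dvd_eq_mod_eq_0)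
  moreover have "0 \<le> r" "r < \<delta>"
    using \<open>0 < \<delta>\<close> unfolding r_def by simp_all
  ultimately have r: "0 < x - (\<beta> + q * \<delta>)" "x - (\<beta> + q * \<delta>) < \<delta>"
    by simp_all
  have "P \<beta>" "P x"
    using assms(2,3,7) by blast+
  \<comment> \<open>A progression point between \<open>x\<close> and \<open>\<beta>\<close>, closer than \<open>\<delta>\<close> to \<open>x\<close>, is in \<open>S\<close> by convexity.\<close>
  obtain k where "P (\<beta> + k * \<delta>)" "0 < \<bar>x - (\<beta> + k * \<delta>)\<bar>" "\<bar>x - (\<beta> + k * \<delta>)\<bar> < \<delta>"
  proof (cases "\<beta> \<le> x")
    case True
    then have "0 \<le> q"
      unfolding q_def using \<open>0 < \<delta>\<close> by (simp add: pos_imp_zdiv_nonneg_iff)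
    then have "P (\<beta> + q * \<delta>)"
      using convex[OF \<open>P \<beta>\<close> \<open>P x\<close>] r \<open>0 < \<delta>\<close> by simp
    then show thesis
      using that r by simp
  next
    case False
    then have "q < 0"
      unfolding q_def using \<open>0 < \<delta>\<close> by (simp add: pos_imp_zdiv_neg_iff)
    then have "(q + 1) * \<delta> \<le> 0"
      using \<open>0 < \<delta>\<close> by (simp add: mult_nonpos_nonneg)
    then have "P (\<beta> + (q + 1) * \<delta>)"
      using convex[OF \<open>P x\<close> \<open>P \<beta>\<close>, of "\<beta> + (q + 1) * \<delta>"] r by (simp add: algebra_simps)
    then show thesis
      using that[of "q + 1"] r by (simp add: algebra_simps)
  qed
  then show False
    using min_gap[OF \<open>x \<in> S\<close> prog] by fastforce
qed

lemma closed_int_set_eq_progression: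
  fixes S :: "int set"
  assumes convex: "\<And>x y z. P x \<Longrightarrow> P z \<Longrightarrow> x \<le> y \<Longrightarrow> y \<le> z \<Longrightarrow> P y"
    and closed: "\<And>a b c. a \<in> S \<Longrightarrow> b \<in> S \<Longrightarrow> c \<in> S \<Longrightarrow> P (a - b + c) \<Longrightarrow> a - b + c \<in> S"
    and "S \<subseteq> Collect P" "s \<in> S" "t \<in> S" "s \<noteq> t"
  shows "\<exists>\<beta> \<delta>. S = {x. P x \<and> x mod \<delta> = \<beta> mod \<delta>}"
proof -
  define gap where "gap n \<longleftrightarrow> 0 < n \<and> (\<exists>x\<in>S. \<exists>y\<in>S. int n = x - y)" for n
  define \<delta> where "\<delta> = int (LEAST n. gap n)"
  have gap_abs: "gap (nat \<bar>x - y\<bar>)" if "x \<in> S" "y \<in> S" "x \<noteq> y" for x y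
    unfolding gap_def using that by (cases "x < y") force+
  then have "gap (nat \<delta>)"
    unfolding \<delta>_def using assms(4-6) by (metis LeastI nat_int)
  then obtain \<beta> where "\<beta> \<in> S" "\<beta> + \<delta> \<in> S" "0 < \<delta>"
    unfolding gap_def by force
  have min_gap: "\<delta> \<le> \<bar>x - y\<bar>" if "x \<in> S" "y \<in> S" "x \<noteq> y" for x y
    unfolding \<delta>_def using Least_le[of gap, OF gap_abs[OF that]] by linarith
  have prog: "\<beta> + k * \<delta> \<in> S" if "P (\<beta> + k * \<delta>)" for k
    using \<open>0 < \<delta>\<close> that
    by (intro progression_mem_closed_set[of P S, OF convex closed assms(3) \<open>\<beta> \<in> S\<close> \<open>\<beta> + \<delta> \<in> S\<close>]) simp_all
  have "x mod \<delta> = \<beta> mod \<delta>" if "x \<in> S" for x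
    by (rule mod_eq_of_min_gap[of P S, OF convex assms(3) \<open>\<beta> \<in> S\<close> \<open>0 < \<delta>\<close> prog min_gap that])
  moreover have "x \<in> S" if "P x" "x mod \<delta> = \<beta> mod \<delta>" for x
  proof -
    have "x = \<beta> + ((x - \<beta>) div \<delta>) * \<delta>"
      using that(2) by (simp add: mod_eq_dvd_iff)
    then show ?thesis
      using prog that(1) by metis
  qed
  ultimately show ?thesis
    using assms(3) by blast
qed

lemma to_real_diff_add: "to_real (a - b + c) = to_real a + (to_real c - to_real b)"
  by (simp add: to_real_def vec_eq_iff)

lemma Lam_subset_affine_hull:
  assumes "G \<noteq> {}"
  shows "to_real ` Lam G \<subseteq> affine hull (to_real ` G)"
proof -
  let ?A = "{x. to_real x \<in> affine hull (to_real ` G)}"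
  have "G \<subseteq> ?A"
    by (simp add: hull_inc subsetI)
  moreover obtain g where "g \<in> G"
    using assms by blast
  moreover have "is_coset ?A"
  proof (rule is_cosetI)
    show "g \<in> ?A" using \<open>g \<in> G\<close> by (simp add: hull_inc)
    show "a - b + c \<in> ?A" if "a \<in> ?A" "b \<in> ?A" "c \<in> ?A" for a b c
    proof -
      have "to_real a + 1 *\<^sub>R (to_real c - to_real b) \<in> affine hull (to_real ` G)"
        using mem_affine_3_minus[OF affine_affine_hull, of "to_real a" "to_real ` G" "to_real c" "to_real b" 1] that by simp
      then show ?thesis by (simp add: to_real_diff_add)
    qed
  qed
  ultimately show ?thesis
    using Lam_subset by blast
qed

lemma collinear_Lam:
  assumes "G \<noteq> {}" "collinear (to_real ` G)"
  shows "collinear (to_real ` Lam G)"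
  using assms(2) collinear_subset[OF _ Lam_subset_affine_hull[OF assms(1)]]
  by (simp add: collinear_affine_hull_collinear)

lemma two_points_if_aff_dim_eq_1:
  assumes "aff_dim (f ` T) = 1"
  obtains a b where "a \<in> T" "b \<in> T" "a \<noteq> b"
proof (rule ccontr)
  assume "\<not> thesis"
  then have "T = {} \<or> (\<exists>x. T = {x})"
    using that by blast
  then show False
    using assms by auto
qed

text \<open>The integer points of the real line \<open>p + \<real> u\<close>: all \<open>2 \<times> 2\<close> minors of \<open>(u, x - p)\<close> vanish.\<close>

definition lattice_line :: "int ^ 'd \<Rightarrow> int ^ 'd \<Rightarrow> (int ^ 'd) set" where
  "lattice_line p u = {x. \<forall>j k. u $ j * (x - p) $ k = u $ k * (x - p) $ j}"

lemma lattice_lineD: "x \<in> lattice_line p u \<Longrightarrow> u $ j * (x - p) $ k = u $ k * (x - p) $ j"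
  unfolding lattice_line_def by blast

lemma lattice_line_diff_add:
  assumes "a \<in> lattice_line p u" "b \<in> lattice_line p u" "c \<in> lattice_line p u"
  shows "a - b + c \<in> lattice_line p u"
  unfolding lattice_line_def
proof (intro CollectI allI)
  fix j k
  have "u $ j * (a - b + c - p) $ k = u $ j * (a - p) $ k - u $ j * (b - p) $ k + u $ j * (c - p) $ k"
    by (simp add: algebra_simps)
  also have "\<dots> = u $ k * (a - p) $ j - u $ k * (b - p) $ j + u $ k * (c - p) $ j"
    using assms[THEN lattice_lineD, of j k] by linarith
  also have "\<dots> = u $ k * (a - b + c - p) $ j"
    by (simp add: algebra_simps)
  finally show "u $ j * (a - b + c - p) $ k = u $ k * (a - b + c - p) $ j" .
qed

lemma collinear_subset_lattice_line:
  assumes "collinear (to_real ` A)" "p \<in> A" "q \<in> A"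
  shows "A \<subseteq> lattice_line p (q - p)"
proof
  fix x assume "x \<in> A"
  obtain v where v: "\<forall>y\<in>to_real ` A. \<forall>z\<in>to_real ` A. \<exists>c. y - z = c *\<^sub>R v"
    using assms(1) unfolding collinear_def by blast
  obtain c d where cx: "to_real x - to_real p = c *\<^sub>R v" and dq: "to_real q - to_real p = d *\<^sub>R v"
    using v \<open>x \<in> A\<close> assms(2,3) by blast
  have "real_of_int ((x - p) $ k) = c * v $ k" "real_of_int ((q - p) $ k) = d * v $ k" for k
    using arg_cong[OF cx, of "\<lambda>w. w $ k"] arg_cong[OF dq, of "\<lambda>w. w $ k"]
    by (simp_all add: to_real_def)
  then have "real_of_int ((q - p) $ j * (x - p) $ k) = real_of_int ((q - p) $ k * (x - p) $ j)" for j k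
    by simp
  then show "x \<in> lattice_line p (q - p)"
    unfolding lattice_line_def of_int_eq_iff by blast
qed

lemma lattice_line_eqI:
  assumes "u $ i \<noteq> 0" "x \<in> lattice_line p u" "y \<in> lattice_line p u" "x $ i = y $ i"
  shows "x = y"
proof -
  have "u $ i * (x - p) $ k = u $ i * (y - p) $ k" for k
    using assms(2,3)[THEN lattice_lineD, of i k] assms(4) by simp
  then show ?thesis
    using assms(1) by (simp add: vec_eq_iff)
qed

text \<open>For \<open>0 < u $ i\<close>: the point of the line \<open>p + \<real> u\<close> with \<open>i\<close>-th coordinate \<open>t\<close>,
  scaled by \<open>u $ i\<close>, has nonnegative coordinates.\<close>

definition Nd_at_coord :: "int ^ 'd \<Rightarrow> int ^ 'd \<Rightarrow> 'd \<Rightarrow> int \<Rightarrow> bool" where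
  "Nd_at_coord p u i t \<longleftrightarrow> (\<forall>k. 0 \<le> u $ i * p $ k + u $ k * (t - p $ i))"

lemma lattice_line_Nd_iff:
  assumes "0 < u $ i" "x \<in> lattice_line p u"
  shows "x \<in> Nd \<longleftrightarrow> Nd_at_coord p u i (x $ i)"
proof -
  have "u $ i * x $ k = u $ i * p $ k + u $ k * (x $ i - p $ i)" for k
    using lattice_lineD[OF assms(2), of i k] by (simp add: algebra_simps)
  moreover have "0 \<le> x $ k \<longleftrightarrow> 0 \<le> u $ i * x $ k" for k
    using assms(1) by (simp add: zero_le_mult_iff)
  ultimately show ?thesis
    unfolding Nd_def Nd_at_coord_def by simp
qed

lemma Nd_at_coord_between:
  "Nd_at_coord p u i x \<Longrightarrow> Nd_at_coord p u i z \<Longrightarrow> x \<le> y \<Longrightarrow> y \<le> z \<Longrightarrow> Nd_at_coord p u i y"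
  using affine_nonneg_between[of "u $ i * p $ k - u $ k * p $ i" "u $ k" x z y for k]
  unfolding Nd_at_coord_def by (simp add: algebra_simps)

lemma closed_coord_image_eq_progression:
  fixes C :: "(int ^ 'd) set"
  assumes "0 < u $ i" "C \<subseteq> lattice_line p u" "C \<subseteq> Nd"
    and closed: "\<And>x y z. x \<in> C \<Longrightarrow> y \<in> C \<Longrightarrow> z \<in> C \<Longrightarrow> x - y + z \<in> Nd \<Longrightarrow> x - y + z \<in> C"
    and "a \<in> C" "b \<in> C" "a $ i \<noteq> b $ i"
  shows "\<exists>\<beta> \<delta>. (\<lambda>x. x $ i) ` C = {t. Nd_at_coord p u i t \<and> t mod \<delta> = \<beta> mod \<delta>}"
proof (rule closed_int_set_eq_progression)
  show "(\<lambda>x. x $ i) ` C \<subseteq> Collect (Nd_at_coord p u i)"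
  proof (rule image_subsetI, rule CollectI)
    show "Nd_at_coord p u i (x $ i)" if "x \<in> C" for x
      using that assms(2,3) lattice_line_Nd_iff[OF assms(1)] by blast
  qed
  show "s - t + r \<in> (\<lambda>x. x $ i) ` C"
    if mem: "s \<in> (\<lambda>x. x $ i) ` C" "t \<in> (\<lambda>x. x $ i) ` C" "r \<in> (\<lambda>x. x $ i) ` C"
      and nonneg: "Nd_at_coord p u i (s - t + r)" for s t r
  proof -
    obtain x y z where "x \<in> C" "y \<in> C" "z \<in> C" and xyz: "s = x $ i" "t = y $ i" "r = z $ i"
      using mem by blast
    moreover have "x - y + z \<in> lattice_line p u"
      using assms(2) calculation(1-3) by (blast intro: lattice_line_diff_add)
    then have "x - y + z \<in> Nd"
      using lattice_line_Nd_iff[OF assms(1)] nonneg xyz by simp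
    ultimately have "x - y + z \<in> C"
      using closed by blast
    then show ?thesis
      unfolding xyz by force
  qed
  show "a $ i \<in> (\<lambda>x. x $ i) ` C" "b $ i \<in> (\<lambda>x. x $ i) ` C" "a $ i \<noteq> b $ i"
    using assms(5-7) by auto
qed (fact Nd_at_coord_between)

lemma closed_subset_lattice_line_eq:
  fixes C :: "(int ^ 'd) set"
  assumes "0 < u $ i" "C \<subseteq> lattice_line p u" "C \<subseteq> Nd"
    and closed: "\<And>x y z. x \<in> C \<Longrightarrow> y \<in> C \<Longrightarrow> z \<in> C \<Longrightarrow> x - y + z \<in> Nd \<Longrightarrow> x - y + z \<in> C"
    and "a \<in> C" "b \<in> C" "a $ i \<noteq> b $ i"
  shows "\<exists>\<beta> \<delta>. C = {x \<in> lattice_line p u \<inter> Nd. x $ i mod \<delta> = \<beta> mod \<delta>}"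
proof -
  obtain \<beta> \<delta> where image_eq: "(\<lambda>x. x $ i) ` C = {t. Nd_at_coord p u i t \<and> t mod \<delta> = \<beta> mod \<delta>}"
    using closed_coord_image_eq_progression[OF assms] by blast
  have "x $ i mod \<delta> = \<beta> mod \<delta>" if "x \<in> C" for x
  proof -
    have "x $ i \<in> (\<lambda>x. x $ i) ` C"
      using that by simp
    then show ?thesis
      unfolding image_eq by blast
  qed
  moreover have "x \<in> C" if "x \<in> lattice_line p u" "x \<in> Nd" "x $ i mod \<delta> = \<beta> mod \<delta>" for x
  proof -
    have "x $ i \<in> (\<lambda>x. x $ i) ` C"
      using that lattice_line_Nd_iff[OF assms(1)] unfolding image_eq by blast
    then obtain y where "y \<in> C" "y $ i = x $ i"
      by (metis imageE)
    moreover have "y = x"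
      using assms(1,2) \<open>y \<in> C\<close> \<open>y $ i = x $ i\<close> that(1) by (intro lattice_line_eqI[of u i y p x]) auto
    ultimately show ?thesis
      by simp
  qed
  ultimately show ?thesis
    using assms(2,3) by blast
qed

lemma collinear_closed_Lam_Int_Nd_subset:
  fixes C :: "(int ^ 'd) set"
  assumes "C \<subseteq> Nd" "collinear (to_real ` C)" "a \<in> C" "b \<in> C" "a \<noteq> b"
    and closed: "\<And>x y z. x \<in> C \<Longrightarrow> y \<in> C \<Longrightarrow> z \<in> C \<Longrightarrow> x - y + z \<in> Nd \<Longrightarrow> x - y + z \<in> C"
  shows "Lam C \<inter> Nd \<subseteq> C"
proof -
  obtain i where "a $ i \<noteq> b $ i"
    using \<open>a \<noteq> b\<close> by (auto simp: vec_eq_iff)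
  then obtain p q where "p \<in> C" "q \<in> C" "p $ i < q $ i"
    using assms(3,4) by (metis linorder_neq_iff)
  define L where "L = lattice_line p (q - p)"
  have "C \<subseteq> L"
    unfolding L_def using assms(2) \<open>p \<in> C\<close> \<open>q \<in> C\<close> by (rule collinear_subset_lattice_line)
  moreover have "0 < (q - p) $ i"
    using \<open>p $ i < q $ i\<close> by simp
  ultimately have "\<exists>\<beta> \<delta>. C = {x \<in> L \<inter> Nd. x $ i mod \<delta> = \<beta> mod \<delta>}"
    unfolding L_def using \<open>p $ i < q $ i\<close>
    by (intro closed_subset_lattice_line_eq[OF _ _ assms(1) closed \<open>p \<in> C\<close> \<open>q \<in> C\<close>]) auto
  then obtain \<beta> \<delta> where C_eq: "C = {x \<in> L \<inter> Nd. x $ i mod \<delta> = \<beta> mod \<delta>}"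
    by blast
  define M where "M = {x \<in> L. x $ i mod \<delta> = \<beta> mod \<delta>}"
  have "Lam C \<subseteq> M"
  proof (rule Lam_subset[OF is_cosetI])
    show "C \<subseteq> M"
      unfolding C_eq M_def by blast
    then show "p \<in> M"
      using \<open>p \<in> C\<close> by blast
    show "x - y + z \<in> M" if "x \<in> M" "y \<in> M" "z \<in> M" for x y z
    proof -
      have "(x $ i - y $ i + z $ i) mod \<delta> = (\<beta> - \<beta> + \<beta>) mod \<delta>"
        using that unfolding M_def by (blast intro: mod_add_cong mod_diff_cong)
      moreover have "x - y + z \<in> L"
        using that unfolding M_def L_def by (blast intro: lattice_line_diff_add)
      ultimately show ?thesis
        unfolding M_def by simp
    qed
  qed
  then show ?thesis
    unfolding C_eq M_def by blast
qed

theorem lemma3p2: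
  fixes T :: "(int ^ 'd) set"
  assumes "T \<subseteq> Nd"
    and "aff_dim (to_real ` T) = 1"
  shows "En_completion 1 T = Lam T \<inter> Nd"
proof
  let ?C = "En_completion 1 T"
  show "?C \<subseteq> Lam T \<inter> Nd"
    using assms(1) by (rule En_completion_subset)
  obtain a b where "a \<in> T" "b \<in> T" "a \<noteq> b"
    using assms(2) by (rule two_points_if_aff_dim_eq_1)
  have "T \<subseteq> ?C"
    using assms(1) by (rule subset_En_completion)
  have "collinear (to_real ` Lam T)"
    using assms(2) \<open>a \<in> T\<close> by (intro collinear_Lam) (auto simp: collinear_aff_dim)
  then have "collinear (to_real ` ?C)"
    using \<open>?C \<subseteq> Lam T \<inter> Nd\<close> by (meson collinear_subset image_mono le_inf_iff)
  then have "Lam ?C \<inter> Nd \<subseteq> ?C"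
    using \<open>?C \<subseteq> Lam T \<inter> Nd\<close> \<open>T \<subseteq> ?C\<close> \<open>a \<in> T\<close> \<open>b \<in> T\<close> \<open>a \<noteq> b\<close>
    by (intro collinear_closed_Lam_Int_Nd_subset[of ?C a b] En_completion_diff_add[OF assms(1)]) auto
  moreover have "Lam T \<subseteq> Lam ?C"
    using \<open>T \<subseteq> ?C\<close> subset_Lam Lam_subset_Lam by blast
  ultimately show "Lam T \<inter> Nd \<subseteq> ?C"
    by blast
qed

end
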